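(* Suppose $J$ satisfies (J) and (J1). For $0<L_1<L_2$ let $\psi(x)=\min\{1,(L_2-|x|)/L_1\}$, $x\in\mathbb R$. Then for every sufficiently small $\epsilon>0$ there exist $L_\epsilon>0$, $D_1=D_1(\epsilon)>0$, $D_2=D_2(\epsilon)>0$ such that whenever $L_1>L_\epsilon$ and $L_2-L_1>2L_\epsilon$: $\int_0^{L_2}\tilde J(r,\rho)\psi(\rho)d\rho\ge(1-\epsilon)\psi(r)$ for $r\in[0,(L_2-L_1)/2]$, and $\int_0^{L_2}\tilde J(r,\rho)\psi(\rho)d\rho\ge(1-\epsilon)\psi(r)-\frac{D_1}{L_1r}-\frac{D_2}{r^2}$ for $r\in[(L_2-L_1)/2,L_2]$.
   Context: $N\ge2$, $B_\rho=\{|x|<\rho\}\subset\mathbb R^N$. (J): $J\in C(\mathbb R_+)\cap L^\infty(\mathbb R_+)$, $J\ge0$, $J(0)>0$, $\int_{\mathbb R^N}J(|x|)dx=1$. (J1): $\int_0^\infty J(r)r^Ndr<\infty$. $\tilde J(r,\rho)=\int_{\partial B_\rho}J(|x-y|)dS_y$ for $|x|=r$. *)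

theory Defs
  imports "HOL-Analysis.Analysis"
begin

text \<open>Surface measure on the unit sphere of real^'n, defined as the cone measure:
  sigma(A) = N * lambda({t w | 0 < t \<le> 1, w \<in> A}), i.e. N times the push-forward of
  Lebesgue measure on the punctured closed unit ball under y \<mapsto> y/|y|.
  This agrees with the (N-1)-dimensional Hausdorff surface measure.\<close>
definition unit_sphere_measure :: "(real^'n::finite) measure" where
  "unit_sphere_measure =
     density (distr (restrict_space lborel (cball 0 1 - {0})) borel sgn)
             (\<lambda>_. ennreal (real CARD('n)))"

definition sphere_integral :: "real \<Rightarrow> (real^'n::finite \<Rightarrow> real) \<Rightarrow> real" where
  "sphere_integral \<rho> g =
     \<rho> ^ (CARD('n) - 1) * (\<integral>\<omega>. g (\<rho> *\<^sub>R \<omega>) \<partial>(unit_sphere_measure :: (real^'n) measure))"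

text \<open>Jtilde(x, rho) = integral over the sphere of radius rho of J(|x - y|) dS_y
  (only depends on |x| = r).\<close>
definition Jtilde :: "(real \<Rightarrow> real) \<Rightarrow> real^'n::finite \<Rightarrow> real \<Rightarrow> real" where
  "Jtilde J x \<rho> = sphere_integral \<rho> (\<lambda>y::real^'n. J (norm (x - y)))"

definition psi :: "real \<Rightarrow> real \<Rightarrow> real \<Rightarrow> real" where
  "psi L1 L2 s = min 1 ((L2 - \<bar>s\<bar>) / L1)"

end

(*
  In polar coordinates the rho-integral becomes the convolution
  int J(|u|) psi+(|x + u|) du = int J(|u|) psi+(|x - u|) du, where psi+ = max 0 psi.
  Choose R with int_{|u| <= R} J >= 1 - eps/2 and put L_eps = 2R/eps, so that R/L1 <= eps/2.
  For |x| <= (L2 - L1)/2 we have psi(|x + u|) = 1 whenever |u| <= R, which gives the first bound.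
  Otherwise average the two forms: |x + u| + |x - u| <= 2|x| + |u|^2/|x| by the parallelogram
  law, and psi is the minimum of 1 and an affine function of slope -1/L1, so
  psi(|x + u|) + psi(|x - u|) >= 2 psi(|x|) (1 - R/L1) - R^2/(L1 |x|) for |u| <= R.
  This gives the second bound with D1 = R^2/2 and any D2 > 0.
*)

theory Submission
  imports Defs
begin

section \<open>Surface measure and polar coordinates\<close>

lemma sets_unit_sphere_measure [simp, measurable_cong]:
  "sets (unit_sphere_measure :: (real^'n::finite) measure) = sets borel"
  by (simp add: unit_sphere_measure_def)

lemma nn_integral_unit_sphere_measure:
  fixes G :: "real^'n::finite \<Rightarrow> ennreal"
  assumes [measurable]: "G \<in> borel_measurable borel"
  shows "(\<integral>\<^sup>+\<omega>. G \<omega> \<partial>unit_sphere_measure) =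
    (\<integral>\<^sup>+u. ennreal (real CARD('n)) * G (sgn u) * indicator (cball 0 1 - {0}) u \<partial>lborel)"
  unfolding unit_sphere_measure_def
  by (simp add: nn_integral_density nn_integral_distr nn_integral_restrict_space
      measurable_restrict_space1 mult.assoc)

lemma AE_unit_sphere_measure_norm:
  "AE \<omega> in (unit_sphere_measure :: (real^'n::finite) measure). norm \<omega> = 1"
proof -
  have "AE u in restrict_space lborel (cball (0::real^'n) 1 - {0}). norm (sgn u) = 1"
    by (simp add: AE_restrict_space_iff norm_sgn)
  then show ?thesis
    unfolding unit_sphere_measure_def
    by (simp add: AE_density) (subst AE_distr_iff; auto intro: measurable_restrict_space1)
qed

lemma finite_measure_unit_sphere_measure:
  "finite_measure (unit_sphere_measure :: (real^'n::finite) measure)"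
proof -
  have "emeasure (unit_sphere_measure :: (real^'n) measure) (space unit_sphere_measure)
      = ennreal (real CARD('n)) * emeasure lborel (cball (0::real^'n) 1 - {0})"
    by (simp add: emeasure_density emeasure_distr measurable_restrict_space1
        emeasure_restrict_space unit_sphere_measure_def)
  also have "\<dots> < \<infinity>"
    using emeasure_bounded_finite[of "cball (0::real^'n) 1 - {0}"]
    by (simp add: bounded_diff ennreal_mult_less_top)
  finally show ?thesis
    by (intro finite_measureI) (simp add: less_top)
qed

lemma nn_integral_lborel_affine:
  fixes t :: "'a::euclidean_space"
  assumes [measurable]: "f \<in> borel_measurable borel" and "c \<noteq> 0"
  shows "(\<integral>\<^sup>+x. f x \<partial>lborel) = ennreal (\<bar>c\<bar> ^ DIM('a)) * (\<integral>\<^sup>+x. f (t + c *\<^sub>R x) \<partial>lborel)"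
  by (subst lborel_affine[OF \<open>c \<noteq> 0\<close>, of t])
     (simp add: nn_integral_density nn_integral_distr nn_integral_cmult)

lemma nn_integral_power_tail:
  fixes a :: real
  assumes "0 < a" "1 \<le> N"
  shows "(\<integral>\<^sup>+s. ennreal (N * a ^ N / s ^ (N + 1)) * indicator {a..} s \<partial>lborel) = 1"
proof -
  have "(\<integral>\<^sup>+s. ennreal (N * a ^ N / s ^ (N + 1)) * indicator {a..} s \<partial>lborel)
      = ennreal (0 - (- (a ^ N) / a ^ N))"
  proof (rule nn_integral_FTC_atLeast[where F = "\<lambda>s. - (a ^ N) / s ^ N"])
    fix x assume "a \<le> x"
    with assms have "0 < x" by simp
    then show "0 \<le> N * a ^ N / x ^ (N + 1)"
      using assms by simp
    obtain k where k: "N = Suc k"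
      using assms(2) by (cases N) auto
    have "x ^ k + real k * x ^ (k - 1) * x = (1 + real k) * x ^ k"
      by (cases k) (simp_all add: algebra_simps)
    then show "((\<lambda>s. - (a ^ N) / s ^ N) has_real_derivative N * a ^ N / x ^ (N + 1)) (at x)"
      using \<open>0 < x\<close> unfolding k
      by (auto intro!: derivative_eq_intros simp: divide_simps)
  next
    have "((\<lambda>s. - (a ^ N) * inverse (s ^ N)) \<longlongrightarrow> - (a ^ N) * 0) at_top"
      using assms
      by (intro tendsto_intros tendsto_inverse_0_at_top filterlim_pow_at_top filterlim_ident) auto
    then show "((\<lambda>s. - (a ^ N) / s ^ N) \<longlongrightarrow> 0) at_top"
      by (simp add: divide_inverse)
  qed simp
  with assms show ?thesis by simp
qed

text \<open>The weight \<open>N |y|^N / s^(N+1)\<close> on \<open>s \<ge> |y|\<close> has total mass one; inserting it and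
  substituting \<open>y = s u\<close>, then \<open>s = \<rho> / |u|\<close>, turns Lebesgue measure into the cone measure
  defining \<^const>\<open>unit_sphere_measure\<close>.\<close>

lemma nn_integral_lborel_cone_weight:
  fixes g :: "'a::euclidean_space \<Rightarrow> ennreal"
  assumes [measurable]: "g \<in> borel_measurable borel" and "1 \<le> N"
  shows "(\<integral>\<^sup>+y. g y \<partial>lborel) = (\<integral>\<^sup>+s. \<integral>\<^sup>+y. ennreal (N * norm y ^ N / s ^ (N + 1))
            * indicator (cball 0 s - {0}) y * g y \<partial>lborel \<partial>lborel)"
proof -
  define w where "w s y = ennreal (N * norm y ^ N / s ^ (N + 1)) * indicator (cball 0 s - {0}) y"
    for s :: real and y :: 'a
  have weight: "(\<lambda>(s, y). w s y)
      = (\<lambda>(s, y). if 0 < norm y \<and> norm y \<le> s then ennreal (N * norm y ^ N / s ^ (N + 1)) else 0)"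
    by (auto simp: w_def fun_eq_iff)
  have [measurable]: "(\<lambda>(s, y). w s y) \<in> borel_measurable (lborel \<Otimes>\<^sub>M lborel)"
    unfolding weight by measurable
  have "(\<integral>\<^sup>+y. g y \<partial>lborel) = (\<integral>\<^sup>+y. (\<integral>\<^sup>+s. w s y \<partial>lborel) * g y \<partial>lborel)"
  proof (rule nn_integral_cong_AE)
    show "AE y in lborel. g y = (\<integral>\<^sup>+s. w s y \<partial>lborel) * g y"
      using AE_lborel_singleton[of 0]
    proof eventually_elim
      case (elim y)
      then have "(\<integral>\<^sup>+s. w s y \<partial>lborel)
          = (\<integral>\<^sup>+s. ennreal (N * norm y ^ N / s ^ (N + 1)) * indicator {norm y..} s \<partial>lborel)"
        unfolding w_def by (intro nn_integral_cong) (auto simp: indicator_def)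
      also have "\<dots> = 1"
        using elim \<open>1 \<le> N\<close> by (intro nn_integral_power_tail) auto
      finally show ?case
        by simp
    qed
  qed
  also have "\<dots> = (\<integral>\<^sup>+y. \<integral>\<^sup>+s. w s y * g y \<partial>lborel \<partial>lborel)"
    by (simp add: nn_integral_multc)
  also have "\<dots> = (\<integral>\<^sup>+s. \<integral>\<^sup>+y. w s y * g y \<partial>lborel \<partial>lborel)"
    by (rule lborel_pair.Fubini') measurable
  finally show ?thesis
    by (simp only: w_def)
qed

lemma polar_scaling_step:
  fixes g :: "real^'n::finite \<Rightarrow> ennreal"
  assumes g_measurable: "g \<in> borel_measurable borel"
  defines "N \<equiv> CARD('n)"
  shows "(\<integral>\<^sup>+y. ennreal (N * norm y ^ N / s ^ (N + 1)) * indicator (cball 0 s - {0}) y * g y \<partial>lborel)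
       = (\<integral>\<^sup>+u. ennreal (N * s ^ (N - 1) * norm u ^ N) * indicator {0<..} s
                 * indicator (cball 0 1 - {0}) u * g (s *\<^sub>R u) \<partial>lborel)"
proof (cases "0 < s")
  case True
  note g_measurable [measurable]
  have [measurable]: "cball 0 s - {0} \<in> sets (borel :: (real^'n) measure)"
    by auto
  have integrand_measurable:
    "(\<lambda>y. ennreal (N * norm y ^ N / s ^ (N + 1)) * indicator (cball 0 s - {0}) y * g y)
      \<in> borel_measurable borel"
    by measurable
  obtain k where k: "N = Suc k"
    unfolding N_def using zero_less_card_finite not0_implies_Suc by blast
  have "(\<integral>\<^sup>+y. ennreal (N * norm y ^ N / s ^ (N + 1)) * indicator (cball 0 s - {0}) y * g y \<partial>lborel)
      = ennreal (\<bar>s\<bar> ^ DIM(real^'n)) * (\<integral>\<^sup>+u. ennreal (N * norm (s *\<^sub>R u) ^ N / s ^ (N + 1))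
                 * indicator (cball 0 s - {0}) (s *\<^sub>R u) * g (s *\<^sub>R u) \<partial>lborel)"
    using nn_integral_lborel_affine[OF integrand_measurable, of s 0] True by (simp only: add_0_left)
  also have "\<dots> = (\<integral>\<^sup>+u. ennreal (N * s ^ (N - 1) * norm u ^ N) * indicator {0<..} s
                 * indicator (cball 0 1 - {0}) u * g (s *\<^sub>R u) \<partial>lborel)"
  proof (subst nn_integral_cmult[symmetric], measurable, intro nn_integral_cong)
    fix u :: "real^'n"
    have dim: "\<bar>s\<bar> ^ DIM(real^'n) = s ^ N"
      using True by (simp add: N_def)
    have "s ^ N * (N * norm (s *\<^sub>R u) ^ N / s ^ (N + 1)) = N * s ^ (N - 1) * norm u ^ N"
      using True by (simp add: k power_mult_distrib)
    moreover have "s *\<^sub>R u \<in> cball 0 s - {0} \<longleftrightarrow> u \<in> cball 0 1 - {0}"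
      using True by (simp add: mult_le_cancel_left1)
    ultimately show "ennreal (\<bar>s\<bar> ^ DIM(real^'n)) * (ennreal (N * norm (s *\<^sub>R u) ^ N / s ^ (N + 1))
                 * indicator (cball 0 s - {0}) (s *\<^sub>R u) * g (s *\<^sub>R u))
        = ennreal (N * s ^ (N - 1) * norm u ^ N) * indicator {0<..} s
                 * indicator (cball 0 1 - {0}) u * g (s *\<^sub>R u)"
      using True by (simp add: dim N_def[symmetric] indicator_def ennreal_mult'[symmetric] mult.assoc[symmetric])
  qed
  finally show ?thesis .
next
  case False
  then have empty: "cball 0 s - {0} = ({} :: (real^'n) set)"
    by (auto simp: not_less) (metis norm_le_zero_iff order_trans)
  show ?thesis
    unfolding empty using False by simp
qed

lemma polar_radial_substitution:
  fixes g :: "'a::euclidean_space \<Rightarrow> ennreal" and N :: nat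
  assumes [measurable]: "g \<in> borel_measurable borel" and "u \<noteq> 0"
  shows "(\<integral>\<^sup>+s. ennreal (N * s ^ (N - 1) * norm u ^ N) * indicator {0<..} s * g (s *\<^sub>R u) \<partial>lborel)
       = (\<integral>\<^sup>+\<rho>. ennreal (N * \<rho> ^ (N - 1)) * indicator {0<..} \<rho> * g (\<rho> *\<^sub>R sgn u) \<partial>lborel)"
proof (cases N)
  case (Suc k)
  have integrand_measurable: "(\<lambda>\<rho>::real. ennreal (N * \<rho> ^ (N - 1)) * indicator {0<..} \<rho> * g (\<rho> *\<^sub>R sgn u))
      \<in> borel_measurable borel"
    by measurable
  have "(\<integral>\<^sup>+\<rho>. ennreal (N * \<rho> ^ (N - 1)) * indicator {0<..} \<rho> * g (\<rho> *\<^sub>R sgn u) \<partial>lborel)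
      = ennreal (norm u) * (\<integral>\<^sup>+s. ennreal (N * (norm u * s) ^ (N - 1)) * indicator {0<..} (norm u * s)
                 * g ((norm u * s) *\<^sub>R sgn u) \<partial>lborel)"
    using nn_integral_real_affine[OF integrand_measurable, where c = "norm u" and t = 0] \<open>u \<noteq> 0\<close>
    by (simp only: add_0_left abs_norm_cancel norm_eq_zero not_False_eq_True)
  also have "\<dots> = (\<integral>\<^sup>+s. ennreal (N * s ^ (N - 1) * norm u ^ N) * indicator {0<..} s * g (s *\<^sub>R u) \<partial>lborel)"
  proof (subst nn_integral_cmult[symmetric], measurable, intro nn_integral_cong)
    fix s :: real
    have weight: "norm u * (N * (norm u * s) ^ (N - 1)) = N * s ^ (N - 1) * norm u ^ N"
      by (simp add: Suc power_mult_distrib)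
    have point: "(norm u * s) *\<^sub>R sgn u = s *\<^sub>R u"
      using \<open>u \<noteq> 0\<close> by (simp add: sgn_div_norm)
    have positive: "indicator {0<..} (norm u * s) = (indicator {0<..} s :: ennreal)"
      using \<open>u \<noteq> 0\<close> by (simp add: indicator_def zero_less_mult_iff)
    have "ennreal (norm u) * (ennreal (N * (norm u * s) ^ (N - 1)) * indicator {0<..} (norm u * s)
                 * g ((norm u * s) *\<^sub>R sgn u))
        = ennreal (norm u * (N * (norm u * s) ^ (N - 1))) * indicator {0<..} (norm u * s)
                 * g ((norm u * s) *\<^sub>R sgn u)"
      by (simp add: ennreal_mult' mult.assoc)
    then show "ennreal (norm u) * (ennreal (N * (norm u * s) ^ (N - 1)) * indicator {0<..} (norm u * s)
                 * g ((norm u * s) *\<^sub>R sgn u))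
        = ennreal (N * s ^ (N - 1) * norm u ^ N) * indicator {0<..} s * g (s *\<^sub>R u)"
      by (simp only: weight point positive)
  qed
  finally show ?thesis ..
qed simp

lemma nn_integral_polar:
  fixes g :: "real^'n::finite \<Rightarrow> ennreal"
  assumes g_measurable: "g \<in> borel_measurable borel"
  defines "N \<equiv> CARD('n)"
  shows "(\<integral>\<^sup>+y. g y \<partial>lborel) = (\<integral>\<^sup>+\<rho>. ennreal (\<rho> ^ (N - 1)) * indicator {0<..} \<rho>
            * (\<integral>\<^sup>+\<omega>. g (\<rho> *\<^sub>R \<omega>) \<partial>unit_sphere_measure) \<partial>lborel)"
proof -
  note g_measurable [measurable]
  define S where "S = cball (0::real^'n) 1 - {0}"
  have [measurable]: "S \<in> sets borel"
    unfolding S_def by auto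
  define G where "G s u = ennreal (N * s ^ (N - 1) * norm u ^ N) * indicator {0<..} s
                   * indicator S u * g (s *\<^sub>R u)" for s :: real and u
  define F where "F \<rho> u = ennreal (N * \<rho> ^ (N - 1)) * indicator {0<..} \<rho> * indicator S u
                   * g (\<rho> *\<^sub>R sgn u)" for \<rho> :: real and u
  have [measurable]: "(\<lambda>(s, u). G s u) \<in> borel_measurable (lborel \<Otimes>\<^sub>M lborel)"
    unfolding G_def by measurable
  have [measurable]: "(\<lambda>(\<rho>, u). F \<rho> u) \<in> borel_measurable (lborel \<Otimes>\<^sub>M lborel)"
    unfolding F_def by measurable
  have "(\<integral>\<^sup>+y. g y \<partial>lborel) = (\<integral>\<^sup>+s. \<integral>\<^sup>+y. ennreal (N * norm y ^ N / s ^ (N + 1))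
            * indicator (cball 0 s - {0}) y * g y \<partial>lborel \<partial>lborel)"
    unfolding N_def by (rule nn_integral_lborel_cone_weight) (simp_all add: Suc_leI)
  also have "\<dots> = (\<integral>\<^sup>+s. \<integral>\<^sup>+u. G s u \<partial>lborel \<partial>lborel)"
    unfolding G_def S_def N_def by (simp only: polar_scaling_step[OF g_measurable])
  also have "\<dots> = (\<integral>\<^sup>+u. \<integral>\<^sup>+s. G s u \<partial>lborel \<partial>lborel)"
    by (rule lborel_pair.Fubini') measurable
  also have "\<dots> = (\<integral>\<^sup>+u. \<integral>\<^sup>+\<rho>. F \<rho> u \<partial>lborel \<partial>lborel)"
  proof (rule nn_integral_cong)
    fix u :: "real^'n"
    show "(\<integral>\<^sup>+s. G s u \<partial>lborel) = (\<integral>\<^sup>+\<rho>. F \<rho> u \<partial>lborel)"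
    proof (cases "u \<in> S")
      case True
      then have "u \<noteq> 0"
        by (simp add: S_def)
      with True show ?thesis
        using polar_radial_substitution[OF g_measurable, of u N] by (simp add: G_def F_def)
    qed (simp add: G_def F_def)
  qed
  also have "\<dots> = (\<integral>\<^sup>+\<rho>. \<integral>\<^sup>+u. F \<rho> u \<partial>lborel \<partial>lborel)"
    by (rule lborel_pair.Fubini'[symmetric]) measurable
  also have "\<dots> = (\<integral>\<^sup>+\<rho>. ennreal (\<rho> ^ (N - 1)) * indicator {0<..} \<rho>
            * (\<integral>\<^sup>+\<omega>. g (\<rho> *\<^sub>R \<omega>) \<partial>unit_sphere_measure) \<partial>lborel)"
  proof (rule nn_integral_cong)
    fix \<rho> :: real
    have "(\<integral>\<^sup>+u. F \<rho> u \<partial>lborel) = ennreal (\<rho> ^ (N - 1)) * indicator {0<..} \<rho>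
        * (\<integral>\<^sup>+u. ennreal N * g (\<rho> *\<^sub>R sgn u) * indicator S u \<partial>lborel)"
      unfolding F_def
      by (subst nn_integral_cmult[symmetric]) (auto intro!: nn_integral_cong
          simp: indicator_def ennreal_mult' mult_ac)
    then show "(\<integral>\<^sup>+u. F \<rho> u \<partial>lborel) = ennreal (\<rho> ^ (N - 1)) * indicator {0<..} \<rho>
        * (\<integral>\<^sup>+\<omega>. g (\<rho> *\<^sub>R \<omega>) \<partial>unit_sphere_measure)"
      by (simp add: nn_integral_unit_sphere_measure S_def N_def)
  qed
  finally show ?thesis .
qed

lemma sphere_integral_nonneg:
  assumes "0 \<le> \<rho>" "\<And>y. 0 \<le> g y"
  shows "0 \<le> sphere_integral \<rho> g"
  unfolding sphere_integral_def using assms by simp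

lemma borel_measurable_sphere_integral [measurable]:
  fixes g :: "real^'n::finite \<Rightarrow> real"
  assumes [measurable]: "g \<in> borel_measurable borel"
  shows "(\<lambda>\<rho>. sphere_integral \<rho> g) \<in> borel_measurable borel"
proof -
  interpret finite_measure "unit_sphere_measure :: (real^'n) measure"
    by (rule finite_measure_unit_sphere_measure)
  show ?thesis
    unfolding sphere_integral_def by measurable
qed

lemma ennreal_sphere_integral:
  fixes g :: "real^'n::finite \<Rightarrow> real"
  assumes [measurable]: "g \<in> borel_measurable borel"
    and "\<And>y. 0 \<le> g y" "\<And>y. g y \<le> M" "0 \<le> \<rho>"
  shows "ennreal (sphere_integral \<rho> g)
       = ennreal (\<rho> ^ (CARD('n) - 1)) * (\<integral>\<^sup>+\<omega>. g (\<rho> *\<^sub>R \<omega>) \<partial>unit_sphere_measure)"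
proof -
  interpret finite_measure "unit_sphere_measure :: (real^'n) measure"
    by (rule finite_measure_unit_sphere_measure)
  have "integrable unit_sphere_measure (\<lambda>\<omega>. g (\<rho> *\<^sub>R \<omega>))"
    using assms by (intro integrable_const_bound[where B = M]) auto
  then have "(\<integral>\<^sup>+\<omega>. g (\<rho> *\<^sub>R \<omega>) \<partial>unit_sphere_measure) = (\<integral>\<omega>. g (\<rho> *\<^sub>R \<omega>) \<partial>unit_sphere_measure)"
    using assms by (intro nn_integral_eq_integral) auto
  then show ?thesis
    unfolding sphere_integral_def using assms by (simp add: ennreal_mult)
qed

lemma nn_integral_radial_factor:
  fixes G :: "real^'n::finite \<Rightarrow> ennreal" and h :: "real \<Rightarrow> real"
  assumes [measurable]: "G \<in> borel_measurable borel" "h \<in> borel_measurable borel"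
  shows "(\<integral>\<^sup>+y. G y * ennreal (h (norm y)) \<partial>lborel)
       = (\<integral>\<^sup>+\<rho>. ennreal (\<rho> ^ (CARD('n) - 1)) * indicator {0<..} \<rho> * ennreal (h \<rho>)
            * (\<integral>\<^sup>+\<omega>. G (\<rho> *\<^sub>R \<omega>) \<partial>unit_sphere_measure) \<partial>lborel)"
proof -
  have "(\<integral>\<^sup>+y. G y * ennreal (h (norm y)) \<partial>lborel)
      = (\<integral>\<^sup>+\<rho>. ennreal (\<rho> ^ (CARD('n) - 1)) * indicator {0<..} \<rho>
            * (\<integral>\<^sup>+\<omega>. G (\<rho> *\<^sub>R \<omega>) * ennreal (h (norm (\<rho> *\<^sub>R \<omega>))) \<partial>unit_sphere_measure) \<partial>lborel)"
    by (rule nn_integral_polar) measurable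
  also have "\<dots> = (\<integral>\<^sup>+\<rho>. ennreal (\<rho> ^ (CARD('n) - 1)) * indicator {0<..} \<rho> * ennreal (h \<rho>)
            * (\<integral>\<^sup>+\<omega>. G (\<rho> *\<^sub>R \<omega>) \<partial>unit_sphere_measure) \<partial>lborel)"
  proof (rule nn_integral_cong)
    fix \<rho> :: real
    show "ennreal (\<rho> ^ (CARD('n) - 1)) * indicator {0<..} \<rho>
            * (\<integral>\<^sup>+\<omega>. G (\<rho> *\<^sub>R \<omega>) * ennreal (h (norm (\<rho> *\<^sub>R \<omega>))) \<partial>unit_sphere_measure)
        = ennreal (\<rho> ^ (CARD('n) - 1)) * indicator {0<..} \<rho> * ennreal (h \<rho>)
            * (\<integral>\<^sup>+\<omega>. G (\<rho> *\<^sub>R \<omega>) \<partial>unit_sphere_measure)"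
    proof (cases "0 < \<rho>")
      case True
      have "(\<integral>\<^sup>+\<omega>. G (\<rho> *\<^sub>R \<omega>) * ennreal (h (norm (\<rho> *\<^sub>R \<omega>))) \<partial>unit_sphere_measure)
          = (\<integral>\<^sup>+\<omega>. ennreal (h \<rho>) * G (\<rho> *\<^sub>R \<omega>) \<partial>unit_sphere_measure)"
        using AE_unit_sphere_measure_norm
        by (rule nn_integral_cong_AE[OF eventually_mono]) (use True in \<open>simp add: mult.commute\<close>)
      also have "\<dots> = ennreal (h \<rho>) * (\<integral>\<^sup>+\<omega>. G (\<rho> *\<^sub>R \<omega>) \<partial>unit_sphere_measure)"
        by (rule nn_integral_cmult) measurable
      finally show ?thesis
        by (simp add: mult_ac)
    qed simp
  qed
  finally show ?thesis .
qed

lemma nn_integral_eq_integral_sphere_integral: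
  fixes K :: "real^'n::finite \<Rightarrow> real" and f :: "real \<Rightarrow> real"
  assumes [measurable]: "K \<in> borel_measurable borel" "f \<in> borel_measurable borel"
    and K_nonneg: "\<And>z. 0 \<le> K z" and K_bounded: "\<And>z. K z \<le> M"
    and f_nonneg: "\<And>\<rho>. 0 \<le> \<rho> \<Longrightarrow> \<rho> \<le> b \<Longrightarrow> 0 \<le> f \<rho>"
    and f_nonpos: "\<And>\<rho>. b < \<rho> \<Longrightarrow> f \<rho> \<le> 0"
    and finite: "(\<integral>\<^sup>+y. ennreal (K (x - y) * max 0 (f (norm y))) \<partial>lborel) < \<infinity>"
  shows "(\<integral>\<^sup>+y. ennreal (K (x - y) * max 0 (f (norm y))) \<partial>lborel)
       = ennreal (integral {0..b} (\<lambda>\<rho>. sphere_integral \<rho> (\<lambda>y. K (x - y)) * f \<rho>))"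
proof -
  define F where "F \<rho> = sphere_integral \<rho> (\<lambda>y. K (x - y)) * f \<rho>" for \<rho>
  have F_nonneg: "0 \<le> F \<rho>" if "0 \<le> \<rho>" "\<rho> \<le> b" for \<rho>
    unfolding F_def using that K_nonneg f_nonneg by (simp add: sphere_integral_nonneg)
  have "(\<integral>\<^sup>+y. ennreal (K (x - y) * max 0 (f (norm y))) \<partial>lborel)
      = (\<integral>\<^sup>+y. ennreal (K (x - y)) * ennreal (max 0 (f (norm y))) \<partial>lborel)"
    by (simp add: ennreal_mult K_nonneg)
  also have "\<dots> = (\<integral>\<^sup>+\<rho>. ennreal (\<rho> ^ (CARD('n) - 1)) * indicator {0<..} \<rho> * ennreal (max 0 (f \<rho>))
            * (\<integral>\<^sup>+\<omega>. ennreal (K (x - \<rho> *\<^sub>R \<omega>)) \<partial>unit_sphere_measure) \<partial>lborel)"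
    by (rule nn_integral_radial_factor[where h = "\<lambda>\<rho>. max 0 (f \<rho>)"]) measurable
  also have "\<dots> = (\<integral>\<^sup>+\<rho>. ennreal (F \<rho>) * indicator {0..b} \<rho> \<partial>lborel)"
  proof (rule nn_integral_cong_AE)
    show "AE \<rho> in lborel. ennreal (\<rho> ^ (CARD('n) - 1)) * indicator {0<..} \<rho> * ennreal (max 0 (f \<rho>))
            * (\<integral>\<^sup>+\<omega>. ennreal (K (x - \<rho> *\<^sub>R \<omega>)) \<partial>unit_sphere_measure)
          = ennreal (F \<rho>) * indicator {0..b} \<rho>"
      using AE_lborel_singleton[of 0]
    proof eventually_elim
      case (elim \<rho>)
      show ?case
      proof (cases "0 < \<rho>")
        case True
        have sphere: "ennreal (\<rho> ^ (CARD('n) - 1)) * (\<integral>\<^sup>+\<omega>. ennreal (K (x - \<rho> *\<^sub>R \<omega>)) \<partial>unit_sphere_measure)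
            = ennreal (sphere_integral \<rho> (\<lambda>y. K (x - y)))"
          using True K_nonneg K_bounded by (intro ennreal_sphere_integral[symmetric]) auto
        show ?thesis
        proof (cases "\<rho> \<le> b")
          case True
          with \<open>0 < \<rho>\<close> have "ennreal (max 0 (f \<rho>)) = ennreal (f \<rho>)"
            using f_nonneg by simp
          with sphere \<open>0 < \<rho>\<close> True show ?thesis
            unfolding F_def using K_nonneg f_nonneg
            by (simp add: ennreal_mult' sphere_integral_nonneg mult_ac)
        next
          case False
          with f_nonpos show ?thesis
            by simp
        qed
      qed (use elim in simp)
    qed
  qed
  finally have polar: "(\<integral>\<^sup>+y. ennreal (K (x - y) * max 0 (f (norm y))) \<partial>lborel)
      = (\<integral>\<^sup>+\<rho>. ennreal (F \<rho>) * indicator {0..b} \<rho> \<partial>lborel)" .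
  have "set_borel_measurable borel {0..b} F"
    unfolding set_borel_measurable_def F_def by measurable
  with polar finite show ?thesis
    using set_nn_integral_lborel_eq_integral[of "{0..b}" F] F_nonneg unfolding F_def by auto
qed

section \<open>The \<rho>-integral as a convolution\<close>

lemma psi_le_1: "psi L1 L2 s \<le> 1"
  by (simp add: psi_def)

lemma psi_eq_1: "0 < L1 \<Longrightarrow> \<bar>s\<bar> \<le> L2 - L1 \<Longrightarrow> psi L1 L2 s = 1"
  by (simp add: psi_def le_divide_eq)

lemma psi_nonneg: "0 < L1 \<Longrightarrow> \<bar>s\<bar> \<le> L2 \<Longrightarrow> 0 \<le> psi L1 L2 s"
  by (simp add: psi_def)

lemma psi_neg: "0 < L1 \<Longrightarrow> L2 < \<bar>s\<bar> \<Longrightarrow> psi L1 L2 s < 0"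
  by (simp add: psi_def divide_less_0_iff)

lemma borel_measurable_psi [measurable]: "psi L1 L2 \<in> borel_measurable borel"
  unfolding psi_def[abs_def] by measurable

lemma borel_measurable_radial:
  fixes J :: "real \<Rightarrow> real"
  assumes "continuous_on {0..} J"
  shows "(\<lambda>z::'a::euclidean_space. J (norm z)) \<in> borel_measurable borel"
  by (intro borel_measurable_continuous_onI continuous_on_compose2[OF assms continuous_on_norm_id]) auto

lemma nn_integral_lborel_translate:
  fixes x :: "'a::euclidean_space"
  assumes "f \<in> borel_measurable borel"
  shows "(\<integral>\<^sup>+y. f y \<partial>lborel) = (\<integral>\<^sup>+u. f (x + u) \<partial>lborel)"
    and "(\<integral>\<^sup>+y. f y \<partial>lborel) = (\<integral>\<^sup>+u. f (x - u) \<partial>lborel)"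
  using nn_integral_lborel_affine[OF assms, of 1 x] nn_integral_lborel_affine[OF assms, of "-1" x]
  by simp_all

lemma integral_Jtilde_psi_nonneg:
  assumes "\<And>r. 0 \<le> r \<Longrightarrow> 0 \<le> J r" "0 < L1"
  shows "0 \<le> integral {0..L2} (\<lambda>\<rho>. Jtilde J x \<rho> * psi L1 L2 \<rho>)"
proof (cases "(\<lambda>\<rho>. Jtilde J x \<rho> * psi L1 L2 \<rho>) integrable_on {0..L2}")
  case True
  have "0 \<le> Jtilde J x \<rho> * psi L1 L2 \<rho>" if "\<rho> \<in> {0..L2}" for \<rho>
  proof -
    have "0 \<le> Jtilde J x \<rho>"
      unfolding Jtilde_def using that assms(1) by (intro sphere_integral_nonneg) auto
    moreover have "0 \<le> psi L1 L2 \<rho>"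
      using that assms(2) by (intro psi_nonneg) auto
    ultimately show ?thesis
      by simp
  qed
  with True show ?thesis
    by (rule Henstock_Kurzweil_Integration.integral_nonneg)
qed (simp add: not_integrable_integral)

text \<open>Since \<^const>\<open>psi\<close> is negative exactly beyond \<open>L2\<close>, cutting the \<open>\<rho>\<close>-integral at \<open>L2\<close> amounts to
  replacing \<^const>\<open>psi\<close> by its positive part.\<close>

lemma integral_Jtilde_psi_eq_convolution:
  fixes J :: "real \<Rightarrow> real" and x :: "real^'n::finite"
  assumes J_cont: "continuous_on {0..} J"
    and J_nonneg: "\<And>r. 0 \<le> r \<Longrightarrow> 0 \<le> J r" and J_bounded: "\<And>r. 0 \<le> r \<Longrightarrow> J r \<le> M"
    and J_finite: "(\<integral>\<^sup>+z. ennreal (J (norm z)) \<partial>(lborel :: (real^'n) measure)) < \<infinity>"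
    and "0 < L1"
  shows "ennreal (integral {0..L2} (\<lambda>\<rho>. Jtilde J x \<rho> * psi L1 L2 \<rho>))
       = (\<integral>\<^sup>+u. ennreal (J (norm u) * max 0 (psi L1 L2 (norm (x + u)))) \<partial>lborel)"
    and "ennreal (integral {0..L2} (\<lambda>\<rho>. Jtilde J x \<rho> * psi L1 L2 \<rho>))
       = (\<integral>\<^sup>+u. ennreal (J (norm u) * max 0 (psi L1 L2 (norm (x - u)))) \<partial>lborel)"
proof -
  note J_measurable [measurable] = borel_measurable_radial[OF J_cont, where 'a = "real^'n"]
  let ?conv = "\<lambda>y. ennreal (J (norm (x - y)) * max 0 (psi L1 L2 (norm y)))"
  have conv_measurable [measurable]: "?conv \<in> borel_measurable borel"
    by measurable
  have "(\<integral>\<^sup>+y. ?conv y \<partial>lborel) \<le> (\<integral>\<^sup>+y. ennreal (J (norm (x - y))) \<partial>lborel)"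
    using J_nonneg by (intro nn_integral_mono ennreal_leI) (simp add: mult_left_le psi_le_1)
  also have "\<dots> = (\<integral>\<^sup>+z. ennreal (J (norm z)) \<partial>(lborel :: (real^'n) measure))"
    by (subst nn_integral_lborel_translate(2)[of _ x]) simp_all
  finally have "(\<integral>\<^sup>+y. ?conv y \<partial>lborel) < \<infinity>"
    using J_finite by (simp add: order_le_less_trans)
  then have "(\<integral>\<^sup>+y. ?conv y \<partial>lborel) = ennreal (integral {0..L2} (\<lambda>\<rho>. Jtilde J x \<rho> * psi L1 L2 \<rho>))"
    unfolding Jtilde_def using J_nonneg J_bounded \<open>0 < L1\<close>
    by (intro nn_integral_eq_integral_sphere_integral[where K = "\<lambda>z. J (norm z)" and M = M])
       (auto intro: psi_nonneg psi_neg[THEN less_imp_le])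
  then show "ennreal (integral {0..L2} (\<lambda>\<rho>. Jtilde J x \<rho> * psi L1 L2 \<rho>))
       = (\<integral>\<^sup>+u. ennreal (J (norm u) * max 0 (psi L1 L2 (norm (x + u)))) \<partial>lborel)"
    and "ennreal (integral {0..L2} (\<lambda>\<rho>. Jtilde J x \<rho> * psi L1 L2 \<rho>))
       = (\<integral>\<^sup>+u. ennreal (J (norm u) * max 0 (psi L1 L2 (norm (x - u)))) \<partial>lborel)"
    using nn_integral_lborel_translate[OF conv_measurable, of x] by (simp_all add: norm_minus_commute)
qed

section \<open>Lower bounds for the convolution\<close>

lemma norm_add_plus_norm_diff_le:
  fixes x z :: "'a::real_inner"
  assumes "x \<noteq> 0"
  shows "norm (x + z) + norm (x - z) \<le> 2 * norm x + norm z ^ 2 / norm x"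
proof -
  have parallelogram: "norm (x + z) ^ 2 + norm (x - z) ^ 2 = 2 * norm x ^ 2 + 2 * norm z ^ 2"
    by (simp add: power2_norm_eq_inner inner_commute algebra_simps)
  have "(a + b) ^ 2 \<le> 2 * (a ^ 2 + b ^ 2)" for a b :: real
  proof -
    have "2 * (a ^ 2 + b ^ 2) - (a + b) ^ 2 = (a - b) ^ 2"
      by (simp add: power2_eq_square algebra_simps)
    then show ?thesis
      by (metis diff_ge_0_iff_ge zero_le_power2)
  qed
  then have "(norm (x + z) + norm (x - z)) ^ 2 \<le> 2 * (norm (x + z) ^ 2 + norm (x - z) ^ 2)" .
  also have "\<dots> \<le> 4 * norm x ^ 2 + 4 * norm z ^ 2 + (norm z ^ 2 / norm x) ^ 2"
    unfolding parallelogram by simp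
  also have "\<dots> = (2 * norm x + norm z ^ 2 / norm x) ^ 2"
  proof -
    have "2 * (2 * norm x) * (norm z ^ 2 / norm x) = 4 * norm z ^ 2"
      using assms by simp
    then show ?thesis
      by (simp add: power2_sum power_mult_distrib)
  qed
  finally show ?thesis
    by (rule power2_le_imp_le) simp
qed

lemma min_one_add_min_one_ge:
  fixes a b r \<delta> e :: real
  assumes sum: "2 * r - e \<le> a + b" and close: "\<bar>a - r\<bar> \<le> \<delta>" "\<bar>b - r\<bar> \<le> \<delta>"
    and "\<delta> \<le> 1/2" "0 \<le> e" "0 \<le> r"
  shows "2 * min 1 r * (1 - \<delta>) - e \<le> min 1 a + min 1 b"
proof -
  define m where "m = min 1 r"
  have m: "0 \<le> m" "m \<le> 1" "m \<le> r" "r \<le> 1 \<Longrightarrow> m = r"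
    using \<open>0 \<le> r\<close> by (auto simp: m_def)
  have "0 \<le> \<delta>"
    using close by linarith
  have expand: "2 * m * (1 - \<delta>) = 2 * m - 2 * (m * \<delta>)"
    by (simp add: algebra_simps)
  consider "a \<le> 1" "b \<le> 1" | "1 < a \<or> 1 < b"
    by linarith
  then have "2 * m * (1 - \<delta>) - e \<le> min 1 a + min 1 b"
  proof cases
    case 1
    moreover have "0 \<le> m * \<delta>"
      using m \<open>0 \<le> \<delta>\<close> by simp
    ultimately show ?thesis
      using sum m \<open>0 \<le> e\<close> unfolding expand by (simp add: min_def)
  next
    case 2
    then have "1/2 \<le> r"
      using close \<open>\<delta> \<le> 1/2\<close> by linarith
    then have "1/2 \<le> m"
      by (simp add: m_def)
    then have "0 \<le> (2 * m - 1) * \<delta>"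
      using \<open>0 \<le> \<delta>\<close> by simp
    then have p: "\<delta> \<le> 2 * (m * \<delta>)"
      by (simp add: algebra_simps)
    from 2 consider "1 < a" "1 < b" | "1 < a" "b \<le> 1" | "a \<le> 1" "1 < b"
      by linarith
    then show ?thesis
    proof cases
      case 1
      with p m \<open>0 \<le> \<delta>\<close> \<open>0 \<le> e\<close> show ?thesis
        unfolding expand by simp
    next
      case 2
      then have "min 1 a + min 1 b = 1 + b"
        by simp
      with p m close[unfolded abs_le_iff] \<open>0 \<le> e\<close> show ?thesis
        unfolding expand by linarith
    next
      case 3
      then have "min 1 a + min 1 b = a + 1"
        by simp
      with p m close[unfolded abs_le_iff] \<open>0 \<le> e\<close> show ?thesis
        unfolding expand by linarith
    qed
  qed
  then show ?thesis
    by (simp add: m_def)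
qed

lemma psi_add_psi_diff_ge:
  fixes x z :: "'a::real_inner"
  assumes "0 < L1" "x \<noteq> 0" "norm x \<le> L2" "norm z \<le> R" "R \<le> L1 / 2"
  shows "2 * psi L1 L2 (norm x) * (1 - R / L1) - R^2 / (L1 * norm x)
       \<le> psi L1 L2 (norm (x + z)) + psi L1 L2 (norm (x - z))"
proof -
  have "0 < norm x"
    using assms by simp
  have "norm z ^ 2 / (L1 * norm x) \<le> R ^ 2 / (L1 * norm x)"
    using assms \<open>0 < norm x\<close> by (intro divide_right_mono power_mono) auto
  moreover have "2 * ((L2 - norm x) / L1) - norm z ^ 2 / (L1 * norm x)
      \<le> (L2 - norm (x + z)) / L1 + (L2 - norm (x - z)) / L1"
  proof -
    have "2 * ((L2 - norm x) / L1) - norm z ^ 2 / (L1 * norm x)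
        = (2 * L2 - (2 * norm x + norm z ^ 2 / norm x)) / L1"
      using assms \<open>0 < norm x\<close> by (simp add: field_simps)
    also have "\<dots> \<le> (2 * L2 - (norm (x + z) + norm (x - z))) / L1"
      using norm_add_plus_norm_diff_le[OF \<open>x \<noteq> 0\<close>, of z] assms
      by (intro divide_right_mono) auto
    also have "\<dots> = (L2 - norm (x + z)) / L1 + (L2 - norm (x - z)) / L1"
      by (simp add: add_divide_distrib[symmetric])
    finally show ?thesis .
  qed
  moreover have close: "\<bar>(L2 - norm y) / L1 - (L2 - norm x) / L1\<bar> \<le> R / L1"
    if "norm (y - x) \<le> R" for y
  proof -
    have "\<bar>(L2 - norm y) / L1 - (L2 - norm x) / L1\<bar> = \<bar>norm y - norm x\<bar> / L1"
      using assms by (simp add: diff_divide_distrib[symmetric] abs_minus_commute)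
    also have "\<dots> \<le> R / L1"
      using norm_triangle_ineq3[of y x] that assms by (intro divide_right_mono) auto
    finally show ?thesis .
  qed
  ultimately have "2 * min 1 ((L2 - norm x) / L1) * (1 - R / L1) - R^2 / (L1 * norm x)
      \<le> min 1 ((L2 - norm (x + z)) / L1) + min 1 ((L2 - norm (x - z)) / L1)"
    using assms by (intro min_one_add_min_one_ge close) auto
  then show ?thesis
    by (simp add: psi_def)
qed

lemma nn_integral_ge_on_set:
  fixes K \<phi> :: "'a \<Rightarrow> real"
  assumes [measurable]: "K \<in> borel_measurable M" "A \<in> sets M"
    and "\<And>u. 0 \<le> K u" "\<And>u. 0 \<le> \<phi> u" "\<And>u. u \<in> A \<Longrightarrow> c \<le> \<phi> u" "0 \<le> c"
  shows "ennreal c * (\<integral>\<^sup>+u. ennreal (K u) * indicator A u \<partial>M) \<le> (\<integral>\<^sup>+u. ennreal (K u * \<phi> u) \<partial>M)"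
proof -
  have "ennreal c * (\<integral>\<^sup>+u. ennreal (K u) * indicator A u \<partial>M)
      = (\<integral>\<^sup>+u. ennreal c * (ennreal (K u) * indicator A u) \<partial>M)"
    by (rule nn_integral_cmult[symmetric]) measurable
  also have "\<dots> \<le> (\<integral>\<^sup>+u. ennreal (K u * \<phi> u) \<partial>M)"
  proof (rule nn_integral_mono)
    fix u
    show "ennreal c * (ennreal (K u) * indicator A u) \<le> ennreal (K u * \<phi> u)"
    proof (cases "u \<in> A")
      case True
      then have "c * K u \<le> K u * \<phi> u"
        using assms mult_left_mono[of c "\<phi> u" "K u"] by (simp add: mult.commute)
      with True \<open>0 \<le> c\<close> show ?thesis
        by (simp add: ennreal_mult'[symmetric] ennreal_leI)
    qed simp
  qed
  finally show ?thesis .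
qed

lemma nn_integral_cball_exhaust:
  fixes f :: "'a::euclidean_space \<Rightarrow> ennreal"
  assumes [measurable]: "f \<in> borel_measurable borel" and "a < (\<integral>\<^sup>+z. f z \<partial>lborel)"
  shows "\<exists>R\<ge>1. a < (\<integral>\<^sup>+z. f z * indicator (cball 0 R) z \<partial>lborel)"
proof -
  define F where "F n z = f z * indicator (cball 0 (Suc n)) z" for n z
  have [measurable]: "cball (0::'a) r \<in> sets borel" for r
    by simp
  have [measurable]: "F n \<in> borel_measurable borel" for n
    unfolding F_def by measurable
  have "incseq F"
    unfolding F_def incseq_def le_fun_def
    by (auto intro!: mult_left_mono simp: indicator_def)
  moreover have "(SUP n. F n z) = f z" for z
  proof -
    obtain n where "norm z \<le> real n"
      using real_arch_simple by blast
    then have "F n z = f z"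
      by (simp add: F_def)
    moreover have "F m z \<le> f z" for m
      by (simp add: F_def indicator_def)
    ultimately show ?thesis
      by (intro antisym SUP_least) (auto intro: SUP_upper2[of n])
  qed
  ultimately have "(SUP n. \<integral>\<^sup>+z. F n z \<partial>lborel) = (\<integral>\<^sup>+z. f z \<partial>lborel)"
    by (subst nn_integral_monotone_convergence_SUP[symmetric]) auto
  with assms obtain n where "a < (\<integral>\<^sup>+z. F n z \<partial>lborel)"
    by (metis less_SUP_iff)
  then show ?thesis
    unfolding F_def by (intro exI[of _ "real (Suc n)"]) auto
qed

lemma convolution_psi_ge_interior:
  fixes K :: "'a::euclidean_space \<Rightarrow> real"
  assumes [measurable]: "K \<in> borel_measurable borel" and "\<And>u. 0 \<le> K u"
    and "0 < L1" "norm x + R \<le> L2 - L1"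
  shows "(\<integral>\<^sup>+u. ennreal (K u) * indicator (cball 0 R) u \<partial>lborel)
       \<le> (\<integral>\<^sup>+u. ennreal (K u * max 0 (psi L1 L2 (norm (x + u)))) \<partial>lborel)"
proof -
  have "psi L1 L2 (norm (x + u)) = 1" if "u \<in> cball 0 R" for u
    using that assms norm_triangle_ineq[of x u] by (intro psi_eq_1) auto
  then have "ennreal 1 * (\<integral>\<^sup>+u. ennreal (K u) * indicator (cball 0 R) u \<partial>lborel)
       \<le> (\<integral>\<^sup>+u. ennreal (K u * max 0 (psi L1 L2 (norm (x + u)))) \<partial>lborel)"
    using assms by (intro nn_integral_ge_on_set) auto
  then show ?thesis
    by simp
qed

lemma convolution_psi_ge_boundary:
  fixes K :: "'a::euclidean_space \<Rightarrow> real"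
  assumes [measurable]: "K \<in> borel_measurable borel" and K_nonneg: "\<And>u. 0 \<le> K u"
    and "0 < L1" "x \<noteq> 0" "norm x \<le> L2" "R \<le> L1 / 2"
  shows "ennreal (max 0 (2 * psi L1 L2 (norm x) * (1 - R / L1) - R^2 / (L1 * norm x)))
           * (\<integral>\<^sup>+u. ennreal (K u) * indicator (cball 0 R) u \<partial>lborel)
       \<le> (\<integral>\<^sup>+u. ennreal (K u * max 0 (psi L1 L2 (norm (x + u)))) \<partial>lborel)
          + (\<integral>\<^sup>+u. ennreal (K u * max 0 (psi L1 L2 (norm (x - u)))) \<partial>lborel)"
proof -
  let ?\<phi> = "\<lambda>u. max 0 (psi L1 L2 (norm (x + u))) + max 0 (psi L1 L2 (norm (x - u)))"
  have "max 0 (2 * psi L1 L2 (norm x) * (1 - R / L1) - R^2 / (L1 * norm x)) \<le> ?\<phi> u"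
    if "u \<in> cball 0 R" for u
    using psi_add_psi_diff_ge[of L1 x L2 u R] that assms by auto
  then have "ennreal (max 0 (2 * psi L1 L2 (norm x) * (1 - R / L1) - R^2 / (L1 * norm x)))
           * (\<integral>\<^sup>+u. ennreal (K u) * indicator (cball 0 R) u \<partial>lborel)
      \<le> (\<integral>\<^sup>+u. ennreal (K u * ?\<phi> u) \<partial>lborel)"
    using K_nonneg by (intro nn_integral_ge_on_set) auto
  also have "\<dots> = (\<integral>\<^sup>+u. ennreal (K u * max 0 (psi L1 L2 (norm (x + u))))
                        + ennreal (K u * max 0 (psi L1 L2 (norm (x - u)))) \<partial>lborel)"
    using K_nonneg by (intro nn_integral_cong) (simp add: distrib_left)
  also have "\<dots> = (\<integral>\<^sup>+u. ennreal (K u * max 0 (psi L1 L2 (norm (x + u)))) \<partial>lborel)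
          + (\<integral>\<^sup>+u. ennreal (K u * max 0 (psi L1 L2 (norm (x - u)))) \<partial>lborel)"
    by (rule nn_integral_add) measurable
  finally show ?thesis .
qed

lemma integral_Jtilde_psi_ge_interior:
  fixes J :: "real \<Rightarrow> real" and x :: "real^'n::finite"
  assumes J_cont: "continuous_on {0..} J"
    and J_nonneg: "\<And>r. 0 \<le> r \<Longrightarrow> 0 \<le> J r" and J_bounded: "\<And>r. 0 \<le> r \<Longrightarrow> J r \<le> M"
    and J_finite: "(\<integral>\<^sup>+z. ennreal (J (norm z)) \<partial>(lborel :: (real^'n) measure)) < \<infinity>"
    and mass: "ennreal m \<le> (\<integral>\<^sup>+u. ennreal (J (norm u)) * indicator (cball 0 R) u \<partial>(lborel :: (real^'n) measure))"
    and "0 < L1" "norm x + R \<le> L2 - L1"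
  shows "m \<le> integral {0..L2} (\<lambda>\<rho>. Jtilde J x \<rho> * psi L1 L2 \<rho>)"
proof -
  have "ennreal m \<le> (\<integral>\<^sup>+u. ennreal (J (norm u)) * indicator (cball (0::real^'n) R) u \<partial>lborel)"
    by (fact mass)
  also have "\<dots> \<le> (\<integral>\<^sup>+u. ennreal (J (norm u) * max 0 (psi L1 L2 (norm (x + u)))) \<partial>lborel)"
    by (rule convolution_psi_ge_interior[OF borel_measurable_radial[OF J_cont]]) (use assms in auto)
  also have "\<dots> = ennreal (integral {0..L2} (\<lambda>\<rho>. Jtilde J x \<rho> * psi L1 L2 \<rho>))"
    using integral_Jtilde_psi_eq_convolution(1)[OF J_cont J_nonneg J_bounded J_finite \<open>0 < L1\<close>] by simp
  finally show ?thesis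
    by (simp add: integral_Jtilde_psi_nonneg[of J, OF J_nonneg \<open>0 < L1\<close>])
qed

lemma integral_Jtilde_psi_ge_boundary:
  fixes J :: "real \<Rightarrow> real" and x :: "real^'n::finite"
  assumes J_cont: "continuous_on {0..} J"
    and J_nonneg: "\<And>r. 0 \<le> r \<Longrightarrow> 0 \<le> J r" and J_bounded: "\<And>r. 0 \<le> r \<Longrightarrow> J r \<le> M"
    and J_finite: "(\<integral>\<^sup>+z. ennreal (J (norm z)) \<partial>(lborel :: (real^'n) measure)) < \<infinity>"
    and mass: "ennreal (1 - \<epsilon> / 2) \<le> (\<integral>\<^sup>+u. ennreal (J (norm u)) * indicator (cball 0 R) u \<partial>(lborel :: (real^'n) measure))"
    and "0 < \<epsilon>" "\<epsilon> < 1" "0 < L1" "R / L1 \<le> \<epsilon> / 2" "x \<noteq> 0" "norm x \<le> L2"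
  shows "(1 - \<epsilon>) * psi L1 L2 (norm x) - R^2 / 2 / (L1 * norm x)
       \<le> integral {0..L2} (\<lambda>\<rho>. Jtilde J x \<rho> * psi L1 L2 \<rho>)"
proof -
  define I where "I = integral {0..L2} (\<lambda>\<rho>. Jtilde J x \<rho> * psi L1 L2 \<rho>)"
  define f where "f = psi L1 L2 (norm x)"
  define e where "e = R^2 / (L1 * norm x)"
  define c where "c = max 0 (2 * f * (1 - R / L1) - e)"
  have "0 \<le> I"
    unfolding I_def using J_nonneg \<open>0 < L1\<close> by (rule integral_Jtilde_psi_nonneg)
  have "R \<le> \<epsilon> * L1 / 2"
    using assms by (simp add: divide_le_eq)
  also have "\<dots> \<le> L1 / 2"
    using assms mult_left_le_one_le[of L1 \<epsilon>] by simp
  finally have "R \<le> L1 / 2" .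
  have "ennreal ((1 - \<epsilon> / 2) * c) = ennreal c * ennreal (1 - \<epsilon> / 2)"
    using \<open>\<epsilon> < 1\<close> by (simp add: c_def ennreal_mult mult.commute)
  also have "\<dots> \<le> ennreal c * (\<integral>\<^sup>+u. ennreal (J (norm u)) * indicator (cball (0::real^'n) R) u \<partial>lborel)"
    by (rule mult_left_mono[OF mass]) simp
  also have "\<dots> \<le> (\<integral>\<^sup>+u. ennreal (J (norm u) * max 0 (psi L1 L2 (norm (x + u)))) \<partial>lborel)
          + (\<integral>\<^sup>+u. ennreal (J (norm u) * max 0 (psi L1 L2 (norm (x - u)))) \<partial>lborel)"
    unfolding c_def f_def e_def using assms \<open>R \<le> L1 / 2\<close>
    by (intro convolution_psi_ge_boundary borel_measurable_radial) auto
  also have "\<dots> = ennreal I + ennreal I"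
    unfolding I_def
    by (simp only: integral_Jtilde_psi_eq_convolution[OF J_cont J_nonneg J_bounded J_finite \<open>0 < L1\<close>,
          symmetric])
  also have "\<dots> = ennreal (2 * I)"
    using \<open>0 \<le> I\<close> by (simp add: ennreal_plus[symmetric] del: ennreal_plus)
  finally have "(1 - \<epsilon> / 2) * c \<le> 2 * I"
    using \<open>0 \<le> I\<close> by simp
  moreover have "2 * f * (1 - \<epsilon>) - e \<le> (1 - \<epsilon> / 2) * c"
  proof -
    have "0 \<le> f" "0 \<le> e"
      using assms by (auto simp: f_def e_def intro!: psi_nonneg)
    have "2 * f * (1 - \<epsilon>) \<le> 2 * f * ((1 - \<epsilon> / 2) * (1 - \<epsilon> / 2))"
      using \<open>0 \<le> f\<close> by (intro mult_left_mono) (auto simp: algebra_simps power2_eq_square)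
    also have "\<dots> = (1 - \<epsilon> / 2) * (2 * f * (1 - \<epsilon> / 2))"
      by (simp add: algebra_simps)
    also have "\<dots> \<le> (1 - \<epsilon> / 2) * (2 * f * (1 - R / L1))"
      using \<open>0 \<le> f\<close> assms by (intro mult_left_mono) auto
    finally have "2 * f * (1 - \<epsilon>) \<le> (1 - \<epsilon> / 2) * (2 * f * (1 - R / L1))" .
    moreover have "(1 - \<epsilon> / 2) * e \<le> e"
      using \<open>0 \<le> e\<close> assms by (intro mult_left_le_one_le) auto
    moreover have "(1 - \<epsilon> / 2) * (2 * f * (1 - R / L1) - e) \<le> (1 - \<epsilon> / 2) * c"
      unfolding c_def using assms by (intro mult_left_mono) auto
    ultimately show ?thesis
      using right_diff_distrib[of "1 - \<epsilon> / 2" "2 * f * (1 - R / L1)" e] by linarith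
  qed
  ultimately show ?thesis
    unfolding I_def[symmetric] f_def[symmetric] e_def by (simp add: field_simps)
qed

lemma integral_Jtilde_psi_estimates:
  fixes J :: "real \<Rightarrow> real" and x :: "real^'n::finite"
  assumes J_cont: "continuous_on {0..} J"
    and J_nonneg: "\<And>r. 0 \<le> r \<Longrightarrow> 0 \<le> J r" and J_bounded: "\<And>r. 0 \<le> r \<Longrightarrow> J r \<le> M"
    and J_finite: "(\<integral>\<^sup>+z. ennreal (J (norm z)) \<partial>(lborel :: (real^'n) measure)) < \<infinity>"
    and mass: "ennreal (1 - \<epsilon> / 2)
      \<le> (\<integral>\<^sup>+u. ennreal (J (norm u)) * indicator (cball 0 R) u \<partial>(lborel :: (real^'n) measure))"
    and \<epsilon>: "0 < \<epsilon>" "\<epsilon> < 1" and "1 \<le> R"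
  defines "L\<epsilon> \<equiv> 2 * R / \<epsilon>"
  assumes L: "L\<epsilon> < L1" "2 * L\<epsilon> < L2 - L1"
  shows "norm x \<le> (L2 - L1) / 2 \<Longrightarrow>
      (1 - \<epsilon>) * psi L1 L2 (norm x) \<le> integral {0..L2} (\<lambda>\<rho>. Jtilde J x \<rho> * psi L1 L2 \<rho>)"
    and "(L2 - L1) / 2 \<le> norm x \<Longrightarrow> norm x \<le> L2 \<Longrightarrow>
      (1 - \<epsilon>) * psi L1 L2 (norm x) - R^2 / 2 / (L1 * norm x)
        \<le> integral {0..L2} (\<lambda>\<rho>. Jtilde J x \<rho> * psi L1 L2 \<rho>)"
proof -
  note J_kernel = J_cont J_nonneg J_bounded J_finite
  have "0 < L\<epsilon>" "R < L\<epsilon>"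
    using \<open>1 \<le> R\<close> \<epsilon> by (auto simp: L\<epsilon>_def field_simps)
  show "(1 - \<epsilon>) * psi L1 L2 (norm x) \<le> integral {0..L2} (\<lambda>\<rho>. Jtilde J x \<rho> * psi L1 L2 \<rho>)"
    if "norm x \<le> (L2 - L1) / 2"
  proof -
    have "psi L1 L2 (norm x) = 1"
      using that L \<open>0 < L\<epsilon>\<close> by (intro psi_eq_1) auto
    moreover have "1 - \<epsilon> / 2 \<le> integral {0..L2} (\<lambda>\<rho>. Jtilde J x \<rho> * psi L1 L2 \<rho>)"
      using that L \<open>R < L\<epsilon>\<close> \<open>0 < L\<epsilon>\<close> by (intro integral_Jtilde_psi_ge_interior[OF J_kernel mass]) auto
    ultimately show ?thesis
      using \<epsilon> by simp
  qed
  show "(1 - \<epsilon>) * psi L1 L2 (norm x) - R^2 / 2 / (L1 * norm x)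
      \<le> integral {0..L2} (\<lambda>\<rho>. Jtilde J x \<rho> * psi L1 L2 \<rho>)"
    if "(L2 - L1) / 2 \<le> norm x" "norm x \<le> L2"
  proof (rule integral_Jtilde_psi_ge_boundary[OF J_kernel mass \<epsilon>])
    have "R / L1 \<le> R / L\<epsilon>"
      using L \<open>0 < L\<epsilon>\<close> \<open>1 \<le> R\<close> by (intro divide_left_mono) auto
    then show "R / L1 \<le> \<epsilon> / 2"
      using \<open>1 \<le> R\<close> \<epsilon> by (simp add: L\<epsilon>_def)
  qed (use that L \<open>0 < L\<epsilon>\<close> in auto)
qed

theorem lemma7p4:
  fixes J :: "real \<Rightarrow> real"
  assumes dim: "CARD('n::finite) \<ge> 2"
    and J_cont: "continuous_on {0..} J"
    and J_bdd: "\<exists>M. \<forall>r\<ge>0. \<bar>J r\<bar> \<le> M"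
    and J_nonneg: "\<forall>r\<ge>0. J r \<ge> 0"
    and J_pos0: "J 0 > 0"
    and J_mass: "((\<lambda>x::real^'n. J (norm x)) has_integral 1) UNIV"
    and J1: "(\<lambda>r. J r * r ^ CARD('n)) integrable_on {0..}"
  shows "\<exists>\<epsilon>0>0. \<forall>\<epsilon>. 0 < \<epsilon> \<and> \<epsilon> < \<epsilon>0 \<longrightarrow>
           (\<exists>L\<epsilon>>0. \<exists>D1>0. \<exists>D2>0. \<forall>L1 L2. 0 < L1 \<and> L1 < L2 \<and> L1 > L\<epsilon> \<and> L2 - L1 > 2 * L\<epsilon> \<longrightarrow>
              (\<forall>x::real^'n. norm x \<le> (L2 - L1) / 2 \<longrightarrow>
                 integral {0..L2} (\<lambda>\<rho>. Jtilde J x \<rho> * psi L1 L2 \<rho>) \<ge> (1 - \<epsilon>) * psi L1 L2 (norm x)) \<and>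
              (\<forall>x::real^'n. (L2 - L1) / 2 \<le> norm x \<and> norm x \<le> L2 \<longrightarrow>
                 integral {0..L2} (\<lambda>\<rho>. Jtilde J x \<rho> * psi L1 L2 \<rho>) \<ge>
                   (1 - \<epsilon>) * psi L1 L2 (norm x) - D1 / (L1 * norm x) - D2 / (norm x)^2))"
proof (rule exI[of _ 1], rule conjI[OF zero_less_one], intro allI impI)
  fix \<epsilon> :: real
  assume \<epsilon>: "0 < \<epsilon> \<and> \<epsilon> < 1"
  obtain M where "\<forall>r\<ge>0. \<bar>J r\<bar> \<le> M"
    using J_bdd by blast
  then have J_bounded: "\<And>r. 0 \<le> r \<Longrightarrow> J r \<le> M"
    by (auto dest: abs_le_D1)
  have J_total: "(\<integral>\<^sup>+z. ennreal (J (norm z)) \<partial>(lborel :: (real^'n) measure)) = 1"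
    using nn_integral_has_integral_lebesgue[OF _ J_mass] J_nonneg by simp
  with \<epsilon> have "ennreal (1 - \<epsilon> / 2) < (\<integral>\<^sup>+z. ennreal (J (norm z)) \<partial>(lborel :: (real^'n) measure))"
    by (simp add: ennreal_lessI flip: ennreal_1)
  then obtain R where "1 \<le> R" and mass:
    "ennreal (1 - \<epsilon> / 2) < (\<integral>\<^sup>+u. ennreal (J (norm u)) * indicator (cball (0::real^'n) R) u \<partial>lborel)"
    using nn_integral_cball_exhaust[OF measurable_compose[OF borel_measurable_radial[OF J_cont] measurable_ennreal]]
    by blast
  note estimates = integral_Jtilde_psi_estimates[OF J_cont J_nonneg[rule_format] J_bounded _ less_imp_le[OF mass]]
  have positive: "0 < 2 * R / \<epsilon>" "0 < R^2 / 2"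
    using \<open>1 \<le> R\<close> \<epsilon> by auto
  show "\<exists>L\<epsilon>>0. \<exists>D1>0. \<exists>D2>0. \<forall>L1 L2. 0 < L1 \<and> L1 < L2 \<and> L1 > L\<epsilon> \<and> L2 - L1 > 2 * L\<epsilon> \<longrightarrow>
              (\<forall>x::real^'n. norm x \<le> (L2 - L1) / 2 \<longrightarrow>
                 integral {0..L2} (\<lambda>\<rho>. Jtilde J x \<rho> * psi L1 L2 \<rho>) \<ge> (1 - \<epsilon>) * psi L1 L2 (norm x)) \<and>
              (\<forall>x::real^'n. (L2 - L1) / 2 \<le> norm x \<and> norm x \<le> L2 \<longrightarrow>
                 integral {0..L2} (\<lambda>\<rho>. Jtilde J x \<rho> * psi L1 L2 \<rho>) \<ge>
                   (1 - \<epsilon>) * psi L1 L2 (norm x) - D1 / (L1 * norm x) - D2 / (norm x)^2)"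
    by (rule exI[of _ "2 * R / \<epsilon>"], rule conjI[OF positive(1)], rule exI[of _ "R^2 / 2"],
        rule conjI[OF positive(2)], rule exI[of _ 1], rule conjI[OF zero_less_one])
       (use \<epsilon> \<open>1 \<le> R\<close> J_total in \<open>auto intro: estimates(1) order_trans[OF _ estimates(2)]\<close>)
qed

end
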